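(* Let $G=(V,E)$ be a finite graph. The function $S^B_G$ is non-negative and concave on $FM(G)$.
   Context: $FM(G)=\{\mathbf{x}\in\mathbb{R}^E: x_e\ge0,\ \sum_{e\in\partial v}x_e\le1\ \forall v\in V\}$, where $\partial v$ is the set of edges incident to $v$, and \[ S^B_G(\mathbf{x})=\sum_{e\in E}\big( -x_e\ln x_e +(1-x_e)\ln (1-x_e)\big) - \sum_{v\in V}\Big( 1-\sum_{e\in \partial v} x_e\Big)\ln\Big( 1-\sum_{e\in \partial v}x_e\Big), \] with $0\ln 0=0$. *)

theory Defs
  imports Complex_Main
begin

definition finite_graph :: "'v set \<Rightarrow> 'v set set \<Rightarrow> bool" where
  "finite_graph V E \<longleftrightarrow> finite V \<and> (\<forall>e\<in>E. e \<subseteq> V \<and> card e = 2)"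

definition incident :: "'v set set \<Rightarrow> 'v \<Rightarrow> 'v set set" where
  "incident E v = {e \<in> E. v \<in> e}"

text \<open>The fractional matching polytope; a point of R^E is a function on edges,
  values outside E are required to be 0 (so that it is really a vector in R^E).\<close>
definition FM :: "'v set \<Rightarrow> 'v set set \<Rightarrow> ('v set \<Rightarrow> real) set" where
  "FM V E = {x. (\<forall>e. e \<notin> E \<longrightarrow> x e = 0) \<and> (\<forall>e\<in>E. x e \<ge> 0) \<and>
                (\<forall>v\<in>V. (\<Sum>e\<in>incident E v. x e) \<le> 1)}"

definition xlnx :: "real \<Rightarrow> real" where
  "xlnx t = (if t = 0 then 0 else t * ln t)"

definition bethe_entropy :: "'v set \<Rightarrow> 'v set set \<Rightarrow> ('v set \<Rightarrow> real) \<Rightarrow> real" where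
  "bethe_entropy V E x =
     (\<Sum>e\<in>E. - xlnx (x e) + xlnx (1 - x e))
     - (\<Sum>v\<in>V. xlnx (1 - (\<Sum>e\<in>incident E v. x e)))"

definition concave_on_set :: "('a \<Rightarrow> real) set \<Rightarrow> (('a \<Rightarrow> real) \<Rightarrow> real) \<Rightarrow> bool" where
  "concave_on_set S f \<longleftrightarrow>
     (\<forall>x\<in>S. \<forall>y\<in>S. \<forall>t::real. 0 \<le> t \<and> t \<le> 1 \<longrightarrow>
        t * f x + (1 - t) * f y \<le> f (\<lambda>e. t * x e + (1 - t) * y e))"

end

theory Submission
  imports Defs "HOL-Real_Asymp.Real_Asymp"
begin

text \<open>
  Every edge has two endpoints, so the edge sum in \<open>S\<^sup>B\<close>, and along a segment the edge
  sum in its second derivative, can be split evenly among the vertices. Writing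
  \<open>\<psi>(p) = (1 - p) ln (1 - p) - p ln p\<close>, it then suffices to show at each vertex, with incident
  weights \<open>x\<^sub>i\<close> and slack \<open>r = 1 - \<Sum>x\<^sub>i\<close>, that
  \<open>r ln r \<le> \<Sum>\<psi>(x\<^sub>i) / 2\<close> and \<open>\<Sum>d\<^sub>i\<^sup>2 \<psi>''(x\<^sub>i) / 2 \<le> (\<Sum>d\<^sub>i)\<^sup>2 / r\<close>.
  At most one incident weight exceeds 1/2. If none does, both follow from \<open>\<psi> \<ge> 0\<close> and
  \<open>\<psi>'' \<le> 0\<close> on \<open>[0, 1/2]\<close>. Otherwise the heavy edge is played off against the light ones:
  for the entropy through subadditivity of \<open>\<psi>\<close> on \<open>[0, 1/2]\<close> and superadditivity of
  \<open>t ln t\<close>, for the curvature through the Cauchy--Schwarz inequality in Engel's form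
  \<open>(\<Sum>a\<^sub>i)\<^sup>2 / \<Sum>w\<^sub>i \<le> \<Sum>a\<^sub>i\<^sup>2 / w\<^sub>i\<close> with well-chosen weights.
\<close>

lemma xlnx_eq: "xlnx = (\<lambda>u. u * ln u)"
  by (simp add: xlnx_def fun_eq_iff)

lemma continuous_on_xlnx: "continuous_on {0..} xlnx"
  unfolding continuous_on_def
proof
  fix u :: real assume "u \<in> {0..}"
  show "(xlnx \<longlongrightarrow> xlnx u) (at u within {0..})"
  proof (cases "u = 0")
    case True
    have "((\<lambda>u::real. u * ln u) \<longlongrightarrow> 0) (at_right 0)" by real_asymp
    then show ?thesis using True by (simp add: xlnx_eq at_within_Ici_at_right)
  next
    case False
    with \<open>u \<in> {0..}\<close> have "isCont (\<lambda>u. u * ln u) u" by (intro continuous_intros) auto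
    then show ?thesis unfolding isCont_def xlnx_eq by (rule tendsto_within_subset) simp
  qed
qed

lemma xlnx_nonpos: "0 \<le> u \<Longrightarrow> u \<le> 1 \<Longrightarrow> xlnx u \<le> 0"
  by (cases "u = 0") (auto simp: xlnx_eq intro: mult_nonneg_nonpos)

lemma xlnx_superadditive:
  assumes "0 \<le> a" "0 \<le> b"
  shows "xlnx a + xlnx b \<le> xlnx (a + b)"
proof -
  have "a * ln a \<le> a * ln (a + b)" "b * ln b \<le> b * ln (a + b)"
    using assms by (cases "a = 0"; cases "b = 0"; auto intro: mult_left_mono)+
  then show ?thesis by (simp add: xlnx_eq distrib_right)
qed

lemma segment_nonneg:
  fixes a d s :: real
  assumes "0 \<le> a" "0 \<le> a + d" "0 \<le> s" "s \<le> 1"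
  shows "0 \<le> a + s * d"
proof -
  have "a + s * d = (1 - s) * a + s * (a + d)" by (simp add: algebra_simps)
  also have "\<dots> \<ge> 0" using assms by simp
  finally show ?thesis .
qed

lemma segment_pos:
  fixes a d s :: real
  assumes "0 \<le> a" "0 \<le> a + d" "d \<noteq> 0" "0 < s" "s < 1"
  shows "0 < a + s * d"
proof -
  have "a + s * d = (1 - s) * a + s * (a + d)" by (simp add: algebra_simps)
  also have "\<dots> > 0"
    using assms by (cases "d > 0") (auto intro: add_pos_nonneg add_nonneg_pos)
  finally show ?thesis .
qed

lemma continuous_on_xlnx_segment:
  fixes a d :: real
  assumes "0 \<le> a" "0 \<le> a + d"
  shows "continuous_on {0..1} (\<lambda>s. xlnx (a + s * d))"
  using assms
  by (intro continuous_on_compose2[OF continuous_on_xlnx] continuous_intros)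
     (auto intro: segment_nonneg)

lemma has_real_derivative_xlnx_segment:
  fixes a d t :: real
  assumes "0 \<le> a" "0 \<le> a + d" "0 < t" "t < 1"
  shows "((\<lambda>s. xlnx (a + s * d)) has_real_derivative d * (ln (a + t * d) + 1)) (at t)"
    and "((\<lambda>s. d * (ln (a + s * d) + 1)) has_real_derivative d\<^sup>2 / (a + t * d)) (at t)"
proof -
  have "d = 0 \<or> 0 < a + t * d" using segment_pos[OF assms(1,2) _ assms(3,4)] by blast
  then show "((\<lambda>s. xlnx (a + s * d)) has_real_derivative d * (ln (a + t * d) + 1)) (at t)"
    unfolding xlnx_eq
    by (elim disjE; auto intro!: derivative_eq_intros simp: divide_simps) (simp add: algebra_simps)
  from \<open>d = 0 \<or> 0 < a + t * d\<close>
  show "((\<lambda>s. d * (ln (a + s * d) + 1)) has_real_derivative d\<^sup>2 / (a + t * d)) (at t)"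
    by (elim disjE; auto intro!: derivative_eq_intros simp: divide_simps power2_eq_square)
qed

lemma f''_le0_imp_above_chord:
  fixes g g' g'' :: "real \<Rightarrow> real"
  assumes cont: "continuous_on {0..1} g"
    and g': "\<And>s. 0 < s \<Longrightarrow> s < 1 \<Longrightarrow> (g has_real_derivative g' s) (at s)"
    and g'': "\<And>s. 0 < s \<Longrightarrow> s < 1 \<Longrightarrow> (g' has_real_derivative g'' s) (at s)"
    and nonpos: "\<And>s. 0 < s \<Longrightarrow> s < 1 \<Longrightarrow> g'' s \<le> 0"
    and t: "0 \<le> t" "t \<le> 1"
  shows "t * g 1 + (1 - t) * g 0 \<le> g t"
proof (cases "t = 0 \<or> t = 1")
  case False
  then have t: "0 < t" "t < 1" using t by auto
  have diff: "g differentiable (at s)" if "0 < s" "s < 1" for s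
    using g'[OF that] real_differentiable_def by blast
  obtain l z where z: "0 < z" "z < t" "DERIV g z :> l" "g t - g 0 = t * l"
    using MVT[OF t(1) continuous_on_subset[OF cont]] diff t by fastforce
  obtain l' z' where z': "t < z'" "z' < 1" "DERIV g z' :> l'" "g 1 - g t = (1 - t) * l'"
    using MVT[OF t(2) continuous_on_subset[OF cont]] diff t by fastforce
  have "l = g' z" "l' = g' z'"
    using DERIV_unique[OF z(3) g'] DERIV_unique[OF z'(3) g'] z z' t by auto
  have "g' z' \<le> g' z"
  proof (rule DERIV_nonpos_imp_decreasing_open[of z z' g'])
    show "continuous_on {z..z'} g'"
      using z z' t by (intro continuous_at_imp_continuous_on ballI DERIV_isCont[OF g'']) auto
  qed (use z z' t g'' nonpos in \<open>force+\<close>)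
  have "t * g 1 + (1 - t) * g 0 - g t = t * (g 1 - g t) - (1 - t) * (g t - g 0)"
    by (simp add: algebra_simps)
  also have "\<dots> = t * (1 - t) * (g' z' - g' z)"
    unfolding z(4) z'(4) \<open>l = g' z\<close> \<open>l' = g' z'\<close> by (simp add: algebra_simps)
  also have "\<dots> \<le> 0"
    using t \<open>g' z' \<le> g' z\<close> by (intro mult_nonneg_nonpos) auto
  finally show ?thesis by simp
qed auto

lemma sq_add_div_add_le:
  fixes u v p q :: real
  assumes "0 \<le> p" "0 \<le> q" "p = 0 \<Longrightarrow> u = 0" "q = 0 \<Longrightarrow> v = 0"
  shows "(u + v)\<^sup>2 / (p + q) \<le> u\<^sup>2 / p + v\<^sup>2 / q"
proof (cases "p = 0 \<or> q = 0")
  case False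
  then have "p > 0" "q > 0" using assms by auto
  then have "u\<^sup>2 / p + v\<^sup>2 / q - (u + v)\<^sup>2 / (p + q) = (u * q - v * p)\<^sup>2 / (p * q * (p + q))"
    by (simp add: field_simps power2_eq_square)
  also have "\<dots> \<ge> 0" using \<open>p > 0\<close> \<open>q > 0\<close> by simp
  finally show ?thesis by simp
qed (use assms in auto)

lemma sq_sum_div_sum_le:
  fixes a w :: "'a \<Rightarrow> real"
  assumes "finite A" "\<And>i. i \<in> A \<Longrightarrow> 0 \<le> w i" "\<And>i. i \<in> A \<Longrightarrow> w i = 0 \<Longrightarrow> a i = 0"
  shows "(\<Sum>i\<in>A. a i)\<^sup>2 / (\<Sum>i\<in>A. w i) \<le> (\<Sum>i\<in>A. (a i)\<^sup>2 / w i)"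
  using assms
proof (induction A rule: finite_induct)
  case (insert j A)
  have "(\<Sum>i\<in>A. a i) = 0" if "(\<Sum>i\<in>A. w i) = 0"
    using that insert by (auto simp: sum_nonneg_eq_0_iff intro!: sum.neutral)
  then have "(a j + (\<Sum>i\<in>A. a i))\<^sup>2 / (w j + (\<Sum>i\<in>A. w i))
      \<le> (a j)\<^sup>2 / w j + (\<Sum>i\<in>A. a i)\<^sup>2 / (\<Sum>i\<in>A. w i)"
    using insert by (intro sq_add_div_add_le) (auto intro: sum_nonneg)
  also have "\<dots> \<le> (a j)\<^sup>2 / w j + (\<Sum>i\<in>A. (a i)\<^sup>2 / w i)"
    using insert by auto
  finally show ?case using insert by simp
qed simp

lemma sq_sub_sum_div_le:
  fixes a w :: "'a \<Rightarrow> real"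
  assumes "finite A" "\<And>i. i \<in> A \<Longrightarrow> 0 \<le> w i" "\<And>i. i \<in> A \<Longrightarrow> w i = 0 \<Longrightarrow> a i = 0"
    and "0 \<le> r" "D \<noteq> 0 \<Longrightarrow> 0 < r"
  shows "(D - (\<Sum>i\<in>A. a i))\<^sup>2 / (r / 2 + (\<Sum>i\<in>A. w i)) \<le> 2 * D\<^sup>2 / r + (\<Sum>i\<in>A. (a i)\<^sup>2 / w i)"
proof -
  have "(\<Sum>i\<in>A. a i) = 0" if "(\<Sum>i\<in>A. w i) = 0"
    using that assms(1-3) by (auto simp: sum_nonneg_eq_0_iff intro!: sum.neutral)
  then have "(D + - (\<Sum>i\<in>A. a i))\<^sup>2 / (r / 2 + (\<Sum>i\<in>A. w i))
      \<le> D\<^sup>2 / (r / 2) + (- (\<Sum>i\<in>A. a i))\<^sup>2 / (\<Sum>i\<in>A. w i)"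
    using assms by (intro sq_add_div_add_le) (auto intro: sum_nonneg)
  also have "\<dots> \<le> 2 * D\<^sup>2 / r + (\<Sum>i\<in>A. (a i)\<^sup>2 / w i)"
    using sq_sum_div_sum_le[OF assms(1-3)] by (simp add: mult.commute)
  finally show ?thesis by simp
qed

definition psi :: "real \<Rightarrow> real" where
  "psi p = xlnx (1 - p) - xlnx p"

lemma psi_concave:
  fixes u w t :: real
  assumes u: "0 \<le> u" "u \<le> 1/2" and w: "0 \<le> w" "w \<le> 1/2" and t: "0 \<le> t" "t \<le> 1"
  shows "t * psi u + (1 - t) * psi w \<le> psi (t * u + (1 - t) * w)"
proof -
  define g where "g s = xlnx ((1 - w) + s * (w - u)) - xlnx (w + s * (u - w))" for s
  define g' where "g' s = (w - u) * (ln ((1 - w) + s * (w - u)) + 1) - (u - w) * (ln (w + s * (u - w)) + 1)" for s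
  define g'' where "g'' s = (w - u)\<^sup>2 / ((1 - w) + s * (w - u)) - (u - w)\<^sup>2 / (w + s * (u - w))" for s
  have ends: "0 \<le> 1 - w" "0 \<le> (1 - w) + (w - u)" "0 \<le> w" "0 \<le> w + (u - w)"
    using u w by auto
  have "t * g 1 + (1 - t) * g 0 \<le> g t"
  proof (rule f''_le0_imp_above_chord[of g g' g''])
    show "continuous_on {0..1} g" unfolding g_def
      by (intro continuous_on_diff continuous_on_xlnx_segment ends)
    fix s :: real assume s: "0 < s" "s < 1"
    show "(g has_real_derivative g' s) (at s)" unfolding g_def g'_def
      by (intro DERIV_diff has_real_derivative_xlnx_segment(1) ends s)
    show "(g' has_real_derivative g'' s) (at s)" unfolding g'_def g''_def
      by (intro DERIV_diff has_real_derivative_xlnx_segment(2) ends s)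
    show "g'' s \<le> 0"
    proof (cases "u = w")
      case False
      have "0 < w + s * (u - w)" using ends s False by (intro segment_pos) auto
      have "w + s * (u - w) = (1 - s) * w + s * u" by (simp add: algebra_simps)
      also have "\<dots> \<le> (1 - s) * (1/2) + s * (1/2)"
        using u w s by (intro add_mono mult_left_mono) auto
      also have "\<dots> = 1/2" by (simp add: field_simps)
      finally have "w + s * (u - w) \<le> 1 - (w + s * (u - w))" by simp
      with \<open>0 < w + s * (u - w)\<close>
      have "(u - w)\<^sup>2 / (1 - (w + s * (u - w))) \<le> (u - w)\<^sup>2 / (w + s * (u - w))"
        by (intro divide_left_mono) auto
      then show ?thesis
        unfolding g''_def by (simp add: power2_commute algebra_simps)
    qed (simp add: g''_def)
  qed (use t in auto)
  moreover have "g 1 = psi u" "g 0 = psi w" "g t = psi (t * u + (1 - t) * w)"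
    unfolding g_def psi_def by (simp_all add: algebra_simps)
  ultimately show ?thesis by simp
qed

lemma psi_0 [simp]: "psi 0 = 0"
  by (simp add: psi_def xlnx_def)

lemma psi_nonneg: "0 \<le> p \<Longrightarrow> p \<le> 1/2 \<Longrightarrow> 0 \<le> psi p"
  using psi_concave[of "1/2" 0 "2 * p"] by (simp add: psi_def xlnx_eq)

lemma psi_subadditive:
  assumes "0 \<le> a" "0 \<le> b" "a + b \<le> 1/2"
  shows "psi (a + b) \<le> psi a + psi b"
proof (cases "a + b = 0")
  case False
  then have "a + b > 0" using assms by auto
  define t where "t = a / (a + b)"
  have t: "0 \<le> t" "t \<le> 1" "t * (a + b) = a" "(1 - t) * (a + b) = b"
    using assms \<open>a + b > 0\<close> by (auto simp: t_def field_simps)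
  have "t * psi (a + b) \<le> psi a" "(1 - t) * psi (a + b) \<le> psi b"
    using psi_concave[of "a + b" 0 t] psi_concave[of "a + b" 0 "1 - t"] assms t by auto
  then show ?thesis by (simp add: algebra_simps)
qed (use assms in \<open>simp add: add_nonneg_eq_0_iff\<close>)

lemma psi_sum_le:
  assumes "finite A" "\<And>i. i \<in> A \<Longrightarrow> 0 \<le> x i" "(\<Sum>i\<in>A. x i) \<le> 1/2"
  shows "psi (\<Sum>i\<in>A. x i) \<le> (\<Sum>i\<in>A. psi (x i))"
  using assms
proof (induction A rule: finite_induct)
  case (insert j A)
  have "0 \<le> x j" "0 \<le> (\<Sum>i\<in>A. x i)" "x j + (\<Sum>i\<in>A. x i) \<le> 1/2"
    using insert by (auto intro: sum_nonneg)
  then have "psi (x j + (\<Sum>i\<in>A. x i)) \<le> psi (x j) + psi (\<Sum>i\<in>A. x i)"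
    by (intro psi_subadditive)
  moreover have "psi (\<Sum>i\<in>A. x i) \<le> (\<Sum>i\<in>A. psi (x i))"
    using insert.IH insert.prems(1) \<open>0 \<le> x j\<close> \<open>x j + (\<Sum>i\<in>A. x i) \<le> 1/2\<close> by simp
  ultimately show ?case using insert by simp
qed simp

lemma vertex_entropy_nonneg:
  assumes "finite I" "\<And>i. i \<in> I \<Longrightarrow> 0 \<le> x i" "0 \<le> r" "r = 1 - (\<Sum>i\<in>I. x i)"
  shows "xlnx r \<le> (\<Sum>i\<in>I. psi (x i)) / 2"
proof (cases "\<exists>j\<in>I. x j > 1/2")
  case False
  have "r \<le> 1" using assms by (simp add: sum_nonneg)
  then have "xlnx r \<le> 0" using xlnx_nonpos \<open>0 \<le> r\<close> by simp
  moreover have "0 \<le> (\<Sum>i\<in>I. psi (x i))"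
    using False assms by (intro sum_nonneg psi_nonneg) auto
  ultimately show ?thesis by simp
next
  case True
  then obtain j where j: "j \<in> I" "x j > 1/2" by auto
  define y where "y = (\<Sum>i\<in>I - {j}. x i)"
  have split: "(\<Sum>i\<in>I. f i) = f j + (\<Sum>i\<in>I - {j}. f i)" for f :: "'a \<Rightarrow> real"
    using assms(1) j(1) by (simp add: sum.remove)
  have "0 \<le> y" unfolding y_def using assms by (auto intro: sum_nonneg)
  have xj: "x j = 1 - r - y" using assms(4) split[of x] y_def by simp
  have "psi y \<le> (\<Sum>i\<in>I - {j}. psi (x i))"
    unfolding y_def using assms xj j by (intro psi_sum_le) (auto simp: y_def)
  moreover have "xlnx y + xlnx r \<le> xlnx (y + r)" "xlnx (1 - r - y) + xlnx r \<le> xlnx (1 - y)"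
    using xlnx_superadditive[of y r] xlnx_superadditive[of "1 - r - y" r] \<open>0 \<le> y\<close> assms j xj
    by auto
  ultimately show ?thesis
    unfolding split[of "\<lambda>i. psi (x i)"] xj by (simp add: psi_def xlnx_eq algebra_simps)
qed

lemma light_edge_curvature_absorbed:
  fixes x y d :: real
  assumes "0 < x" "x \<le> y" "y < 1/2"
  shows "d\<^sup>2 / (x * (1 - y) / (1 - 2 * y)) + (d\<^sup>2 / (1 - x) - d\<^sup>2 / x) \<le> 0"
proof -
  have "d\<^sup>2 / x - d\<^sup>2 / (1 - x) - d\<^sup>2 / (x * (1 - y) / (1 - 2 * y))
      = d\<^sup>2 * (y - x) / (x * (1 - x) * (1 - y))"
    using assms by (simp add: divide_simps) (simp add: algebra_simps)
  also have "\<dots> \<ge> 0" using assms by (intro divide_nonneg_pos mult_nonneg_nonneg) auto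
  finally show ?thesis by simp
qed

lemma heavy_edge_curvature_le:
  fixes r y d :: real
  assumes "0 \<le> r" "0 \<le> y" "0 < r + y" "r + y < 1/2"
  shows "d\<^sup>2 / (r + y) - d\<^sup>2 / (1 - r - y) \<le> d\<^sup>2 / (r / 2 + y * (1 - y) / (1 - 2 * y))"
proof -
  define W where "W = y * (1 - y) / (1 - 2 * y)"
  have "0 < r / 2 + W"
    using assms by (cases "r = 0") (auto simp: W_def intro: add_pos_nonneg)
  have "(1 - r - y) * (r + y) - (1 - 2 * r - 2 * y) * (r / 2 + W)
      = (r * (1 - 2 * y)\<^sup>2 / 2 + 2 * r * y * (1 - y)) / (1 - 2 * y)"
    using assms unfolding W_def by (simp add: field_simps) (simp add: algebra_simps power2_eq_square)
  also have "\<dots> \<ge> 0" using assms by simp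
  finally have "(1 - 2 * r - 2 * y) * (r / 2 + W) \<le> (1 - r - y) * (r + y)" by simp
  moreover have "1 / (r + y) - 1 / (1 - r - y) = (1 - 2 * r - 2 * y) / ((1 - r - y) * (r + y))"
    using assms by (simp add: field_simps)
  moreover have "a / P \<le> 1 / Q" if "0 < P" "0 < Q" "a * Q \<le> P" for a P Q :: real
    using that by (simp add: divide_simps mult.commute)
  ultimately have "1 / (r + y) - 1 / (1 - r - y) \<le> 1 / (r / 2 + W)"
    using assms \<open>0 < r / 2 + W\<close> by simp
  then have "d\<^sup>2 * (1 / (r + y) - 1 / (1 - r - y)) \<le> d\<^sup>2 * (1 / (r / 2 + W))"
    by (intro mult_left_mono) auto
  then show ?thesis unfolding W_def by (simp add: right_diff_distrib)
qed

lemma curvature_sum_nonpos: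
  fixes x d :: "'a \<Rightarrow> real"
  assumes "\<And>i. i \<in> I \<Longrightarrow> d i \<noteq> 0 \<Longrightarrow> 0 < x i \<and> x i \<le> 1/2"
  shows "(\<Sum>i\<in>I. (d i)\<^sup>2 / (1 - x i) - (d i)\<^sup>2 / x i) \<le> 0"
proof (rule sum_nonpos)
  fix i assume "i \<in> I"
  show "(d i)\<^sup>2 / (1 - x i) - (d i)\<^sup>2 / x i \<le> 0"
    using assms[OF \<open>i \<in> I\<close>] by (cases "d i = 0") (auto intro: divide_left_mono)
qed

lemma vertex_curvature_le_if_heavy_edge:
  fixes x d :: "'a \<Rightarrow> real"
  assumes fin: "finite I" and x_nonneg: "\<And>i. i \<in> I \<Longrightarrow> 0 \<le> x i"
    and r: "0 \<le> r" "r = 1 - (\<Sum>i\<in>I. x i)"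
    and x_pos: "\<And>i. i \<in> I \<Longrightarrow> d i \<noteq> 0 \<Longrightarrow> 0 < x i \<and> x i < 1"
    and r_pos: "(\<Sum>i\<in>I. d i) \<noteq> 0 \<Longrightarrow> 0 < r"
    and j: "j \<in> I" "d j \<noteq> 0" "x j > 1/2"
  shows "(\<Sum>i\<in>I. (d i)\<^sup>2 / (1 - x i) - (d i)\<^sup>2 / x i) \<le> 2 * (\<Sum>i\<in>I. d i)\<^sup>2 / r"
proof -
  define J where "J = I - {j}"
  define y where "y = (\<Sum>i\<in>J. x i)"
  \<comment> \<open>With these weights each light edge absorbs its own Cauchy--Schwarz term, and their total
    is exactly what the heavy edge needs.\<close>
  define w where "w i = x i * (1 - y) / (1 - 2 * y)" for i
  have split: "(\<Sum>i\<in>I. f i) = f j + (\<Sum>i\<in>J. f i)" for f :: "'a \<Rightarrow> real"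
    unfolding J_def using fin j(1) by (simp add: sum.remove)
  have "finite J" "J \<subseteq> I" using fin by (auto simp: J_def)
  have "0 \<le> y" unfolding y_def using \<open>J \<subseteq> I\<close> x_nonneg by (auto intro: sum_nonneg)
  have xj: "x j = 1 - r - y" using r(2) split[of x] by (simp add: y_def)
  have "x j < 1" using x_pos[OF j(1,2)] by simp
  then have "0 < r + y" "r + y < 1/2" "y < 1/2" using xj j(3) \<open>0 \<le> r\<close> by linarith+
  have light_pos: "0 < x i" if "i \<in> J" "d i \<noteq> 0" for i
    using x_pos \<open>J \<subseteq> I\<close> that by blast
  have x_le_y: "x i \<le> y" if "i \<in> J" for i
    unfolding y_def using that \<open>finite J\<close> \<open>J \<subseteq> I\<close> x_nonneg by (intro member_le_sum) auto
  have w_nonneg: "0 \<le> w i" if "i \<in> J" for i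
    using that \<open>J \<subseteq> I\<close> x_nonneg \<open>y < 1/2\<close> unfolding w_def by (intro divide_nonneg_pos) auto
  have d_zero: "d i = 0" if "i \<in> J" "w i = 0" for i
    using light_pos[OF \<open>i \<in> J\<close>] \<open>w i = 0\<close> \<open>y < 1/2\<close> by (auto simp: w_def)
  have "(\<Sum>i\<in>J. w i) = y * (1 - y) / (1 - 2 * y)"
    unfolding w_def y_def by (simp add: sum_divide_distrib[symmetric] sum_distrib_right[symmetric])
  then have "(d j)\<^sup>2 / (1 - x j) - (d j)\<^sup>2 / x j \<le> (d j)\<^sup>2 / (r / 2 + (\<Sum>i\<in>J. w i))"
    unfolding xj using \<open>0 \<le> r\<close> \<open>0 \<le> y\<close> \<open>0 < r + y\<close> \<open>r + y < 1/2\<close>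
    by (simp add: heavy_edge_curvature_le)
  also have "\<dots> \<le> 2 * (\<Sum>i\<in>I. d i)\<^sup>2 / r + (\<Sum>i\<in>J. (d i)\<^sup>2 / w i)"
  proof -
    have "((\<Sum>i\<in>I. d i) - (\<Sum>i\<in>J. d i))\<^sup>2 / (r / 2 + (\<Sum>i\<in>J. w i))
        \<le> 2 * (\<Sum>i\<in>I. d i)\<^sup>2 / r + (\<Sum>i\<in>J. (d i)\<^sup>2 / w i)"
      using \<open>finite J\<close> w_nonneg d_zero r(1) r_pos by (rule sq_sub_sum_div_le)
    then show ?thesis unfolding split[of d] by simp
  qed
  moreover have "(\<Sum>i\<in>J. (d i)\<^sup>2 / w i + ((d i)\<^sup>2 / (1 - x i) - (d i)\<^sup>2 / x i)) \<le> 0"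
  proof (rule sum_nonpos)
    fix i assume "i \<in> J"
    show "(d i)\<^sup>2 / w i + ((d i)\<^sup>2 / (1 - x i) - (d i)\<^sup>2 / x i) \<le> 0"
    proof (cases "d i = 0")
      case False
      with \<open>i \<in> J\<close> show ?thesis
        unfolding w_def using x_le_y \<open>y < 1/2\<close> by (intro light_edge_curvature_absorbed light_pos) auto
    qed simp
  qed
  ultimately show ?thesis
    unfolding split[of "\<lambda>i. (d i)\<^sup>2 / (1 - x i) - (d i)\<^sup>2 / x i"] by (simp add: sum.distrib)
qed

lemma vertex_curvature_le:
  fixes x d :: "'a \<Rightarrow> real"
  assumes "finite I" "\<And>i. i \<in> I \<Longrightarrow> 0 \<le> x i" "0 \<le> r" "r = 1 - (\<Sum>i\<in>I. x i)"
    and x_pos: "\<And>i. i \<in> I \<Longrightarrow> d i \<noteq> 0 \<Longrightarrow> 0 < x i \<and> x i < 1"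
    and "(\<Sum>i\<in>I. d i) \<noteq> 0 \<Longrightarrow> 0 < r"
  shows "(\<Sum>i\<in>I. (d i)\<^sup>2 / (1 - x i) - (d i)\<^sup>2 / x i) \<le> 2 * (\<Sum>i\<in>I. d i)\<^sup>2 / r"
proof (cases "\<exists>j\<in>I. d j \<noteq> 0 \<and> x j > 1/2")
  case False
  have "0 < x i \<and> x i \<le> 1/2" if "i \<in> I" "d i \<noteq> 0" for i
    using False x_pos[OF that] that by auto
  then have "(\<Sum>i\<in>I. (d i)\<^sup>2 / (1 - x i) - (d i)\<^sup>2 / x i) \<le> 0"
    by (rule curvature_sum_nonpos)
  also have "0 \<le> 2 * (\<Sum>i\<in>I. d i)\<^sup>2 / r" using assms by simp
  finally show ?thesis .
next
  case True
  then obtain j where "j \<in> I" "d j \<noteq> 0" "x j > 1/2" by blast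
  with assms show ?thesis by (rule vertex_curvature_le_if_heavy_edge)
qed

lemma finite_graph_finite_edges:
  assumes "finite_graph V E" shows "finite E"
proof -
  have "E \<subseteq> Pow V" using assms unfolding finite_graph_def by auto
  then show ?thesis using assms unfolding finite_graph_def by (meson finite_Pow_iff finite_subset)
qed
lemma finite_incident:
  assumes "finite_graph V E" shows "finite (incident E v)"
  using finite_graph_finite_edges[OF assms] unfolding incident_def by simp

lemma sum_edges_eq_half_sum_incident:
  fixes h :: "'v set \<Rightarrow> real"
  assumes G: "finite_graph V E"
  shows "(\<Sum>e\<in>E. h e) = (\<Sum>v\<in>V. (\<Sum>e\<in>incident E v. h e) / 2)"
proof -
  have "(\<Sum>v\<in>V. (\<Sum>e\<in>incident E v. h e) / 2) = (\<Sum>v\<in>V. \<Sum>e\<in>{e. e \<in> E \<and> v \<in> e}. h e / 2)"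
    unfolding incident_def by (simp add: sum_divide_distrib)
  also have "\<dots> = (\<Sum>e\<in>E. \<Sum>v\<in>{v. v \<in> V \<and> v \<in> e}. h e / 2)"
    using G finite_graph_finite_edges unfolding finite_graph_def by (intro sum.swap_restrict) auto
  also have "\<dots> = (\<Sum>e\<in>E. h e)"
  proof (rule sum.cong[OF refl])
    fix e assume "e \<in> E"
    then have "{v. v \<in> V \<and> v \<in> e} = e" "card e = 2" using G unfolding finite_graph_def by auto
    then show "(\<Sum>v\<in>{v. v \<in> V \<and> v \<in> e}. h e / 2) = h e" by simp
  qed
  finally show ?thesis by simp
qed

lemma FM_edge_bounds:
  assumes G: "finite_graph V E" and x: "x \<in> FM V E" and e: "e \<in> E"
  shows "0 \<le> x e" "x e \<le> 1"
proof -
  show "0 \<le> x e" using x e by (simp add: FM_def)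
  obtain v where v: "v \<in> e" "v \<in> V"
    using G e unfolding finite_graph_def by (metis card.empty ex_in_conv subset_iff zero_neq_numeral)
  have "x e \<le> (\<Sum>e\<in>incident E v. x e)"
    using finite_incident[OF G] e v x by (intro member_le_sum) (auto simp: incident_def FM_def)
  also have "\<dots> \<le> 1" using x v by (simp add: FM_def)
  finally show "x e \<le> 1" .
qed

lemma FM_vertex_slack_nonneg: "x \<in> FM V E \<Longrightarrow> v \<in> V \<Longrightarrow> 0 \<le> 1 - (\<Sum>e\<in>incident E v. x e)"
  by (simp add: FM_def)

lemma bethe_entropy_nonneg:
  assumes G: "finite_graph V E" and x: "x \<in> FM V E"
  shows "0 \<le> bethe_entropy V E x"
proof -
  have "bethe_entropy V E x = (\<Sum>e\<in>E. psi (x e)) - (\<Sum>v\<in>V. xlnx (1 - (\<Sum>e\<in>incident E v. x e)))"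
    unfolding bethe_entropy_def psi_def by simp
  also have "\<dots> = (\<Sum>v\<in>V. (\<Sum>e\<in>incident E v. psi (x e)) / 2
      - xlnx (1 - (\<Sum>e\<in>incident E v. x e)))"
    unfolding sum_edges_eq_half_sum_incident[OF G] by (simp add: sum_subtractf)
  also have "\<dots> \<ge> 0"
  proof (rule sum_nonneg)
    fix v assume "v \<in> V"
    have "xlnx (1 - (\<Sum>e\<in>incident E v. x e)) \<le> (\<Sum>e\<in>incident E v. psi (x e)) / 2"
      using finite_incident[OF G] FM_edge_bounds[OF G x] FM_vertex_slack_nonneg[OF x \<open>v \<in> V\<close>]
      by (intro vertex_entropy_nonneg) (auto simp: incident_def)
    then show "0 \<le> (\<Sum>e\<in>incident E v. psi (x e)) / 2 - xlnx (1 - (\<Sum>e\<in>incident E v. x e))"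
      by simp
  qed
  finally show ?thesis .
qed

text \<open>The left-hand side is the second derivative of \<open>S\<^sup>B\<close> at \<open>z\<close> in direction \<open>d\<close>.\<close>

lemma bethe_curvature_nonpos:
  fixes z d :: "'v set \<Rightarrow> real"
  assumes G: "finite_graph V E"
    and z_nonneg: "\<And>e. e \<in> E \<Longrightarrow> 0 \<le> z e"
    and slack_nonneg: "\<And>v. v \<in> V \<Longrightarrow> 0 \<le> 1 - (\<Sum>e\<in>incident E v. z e)"
    and z_pos: "\<And>e. e \<in> E \<Longrightarrow> d e \<noteq> 0 \<Longrightarrow> 0 < z e \<and> z e < 1"
    and slack_pos: "\<And>v. v \<in> V \<Longrightarrow> (\<Sum>e\<in>incident E v. d e) \<noteq> 0 \<Longrightarrow> 0 < 1 - (\<Sum>e\<in>incident E v. z e)"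
  shows "(\<Sum>e\<in>E. (d e)\<^sup>2 / (1 - z e) - (d e)\<^sup>2 / z e)
    - (\<Sum>v\<in>V. (\<Sum>e\<in>incident E v. d e)\<^sup>2 / (1 - (\<Sum>e\<in>incident E v. z e))) \<le> 0"
proof -
  have "(\<Sum>e\<in>E. (d e)\<^sup>2 / (1 - z e) - (d e)\<^sup>2 / z e)
      - (\<Sum>v\<in>V. (\<Sum>e\<in>incident E v. d e)\<^sup>2 / (1 - (\<Sum>e\<in>incident E v. z e)))
    = (\<Sum>v\<in>V. (\<Sum>e\<in>incident E v. (d e)\<^sup>2 / (1 - z e) - (d e)\<^sup>2 / z e) / 2
      - (\<Sum>e\<in>incident E v. d e)\<^sup>2 / (1 - (\<Sum>e\<in>incident E v. z e)))"
    unfolding sum_edges_eq_half_sum_incident[OF G] by (simp add: sum_subtractf)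
  also have "\<dots> \<le> 0"
  proof (rule sum_nonpos)
    fix v assume "v \<in> V"
    have "(\<Sum>e\<in>incident E v. (d e)\<^sup>2 / (1 - z e) - (d e)\<^sup>2 / z e)
        \<le> 2 * (\<Sum>e\<in>incident E v. d e)\<^sup>2 / (1 - (\<Sum>e\<in>incident E v. z e))"
      using finite_incident[OF G] z_nonneg z_pos slack_nonneg[OF \<open>v \<in> V\<close>] slack_pos[OF \<open>v \<in> V\<close>]
      by (intro vertex_curvature_le) (auto simp: incident_def)
    moreover have "a / 2 - b / c \<le> 0" if "a \<le> 2 * b / c" for a b c :: real
      using that by (simp add: field_simps)
    ultimately show "(\<Sum>e\<in>incident E v. (d e)\<^sup>2 / (1 - z e) - (d e)\<^sup>2 / z e) / 2
        - (\<Sum>e\<in>incident E v. d e)\<^sup>2 / (1 - (\<Sum>e\<in>incident E v. z e)) \<le> 0"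
      by blast
  qed
  finally show ?thesis .
qed

lemma bethe_curvature_nonpos_on_segment:
  assumes G: "finite_graph V E" and x: "x \<in> FM V E" and y: "y \<in> FM V E"
    and s: "0 < s" "s < 1"
  shows "(\<Sum>e\<in>E. (x e - y e)\<^sup>2 / (1 - (y e + s * (x e - y e))) - (x e - y e)\<^sup>2 / (y e + s * (x e - y e)))
    - (\<Sum>v\<in>V. (\<Sum>e\<in>incident E v. x e - y e)\<^sup>2
        / (1 - (\<Sum>e\<in>incident E v. y e + s * (x e - y e)))) \<le> 0"
proof (rule bethe_curvature_nonpos[OF G])
  have slack: "1 - (\<Sum>e\<in>incident E v. y e + s * (x e - y e))
      = (1 - (\<Sum>e\<in>incident E v. y e))
        + s * ((1 - (\<Sum>e\<in>incident E v. x e)) - (1 - (\<Sum>e\<in>incident E v. y e)))" for v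
    by (simp add: sum.distrib sum_subtractf sum_distrib_left algebra_simps)
  fix v assume "v \<in> V"
  note slack_bounds = FM_vertex_slack_nonneg[OF y \<open>v \<in> V\<close>] FM_vertex_slack_nonneg[OF x \<open>v \<in> V\<close>]
  show "0 \<le> 1 - (\<Sum>e\<in>incident E v. y e + s * (x e - y e))"
    unfolding slack using slack_bounds s by (intro segment_nonneg) auto
  show "0 < 1 - (\<Sum>e\<in>incident E v. y e + s * (x e - y e))"
    if "(\<Sum>e\<in>incident E v. x e - y e) \<noteq> 0"
    unfolding slack using slack_bounds s that by (intro segment_pos) (auto simp: sum_subtractf)
next
  fix e assume "e \<in> E"
  note x_bounds = FM_edge_bounds[OF G x \<open>e \<in> E\<close>] and y_bounds = FM_edge_bounds[OF G y \<open>e \<in> E\<close>]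
  show "0 \<le> y e + s * (x e - y e)"
    using x_bounds y_bounds s by (intro segment_nonneg) auto
  assume "x e - y e \<noteq> 0"
  then have "0 < y e + s * (x e - y e)" "0 < (1 - y e) + s * ((1 - x e) - (1 - y e))"
    using x_bounds y_bounds s by (intro segment_pos; simp)+
  then show "0 < y e + s * (x e - y e) \<and> y e + s * (x e - y e) < 1"
    by (simp add: algebra_simps)
qed

lemma bethe_entropy_above_chord:
  assumes G: "finite_graph V E" and x: "x \<in> FM V E" and y: "y \<in> FM V E"
    and t: "0 \<le> t" "t \<le> 1"
  shows "t * bethe_entropy V E x + (1 - t) * bethe_entropy V E y
    \<le> bethe_entropy V E (\<lambda>e. t * x e + (1 - t) * y e)"
proof -
  define d where "d e = x e - y e" for e
  define D where "D v = (\<Sum>e\<in>incident E v. d e)" for v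
  define R where "R v = 1 - (\<Sum>e\<in>incident E v. y e)" for v
  define g where "g s = (\<Sum>e\<in>E. - xlnx (y e + s * d e) + xlnx ((1 - y e) + s * (- d e)))
      - (\<Sum>v\<in>V. xlnx (R v + s * (- D v)))" for s
  define g' where "g' s = (\<Sum>e\<in>E. - (d e * (ln (y e + s * d e) + 1))
        + (- d e) * (ln ((1 - y e) + s * (- d e)) + 1))
      - (\<Sum>v\<in>V. (- D v) * (ln (R v + s * (- D v)) + 1))" for s
  define g'' where "g'' s = (\<Sum>e\<in>E. - ((d e)\<^sup>2 / (y e + s * d e)) + (- d e)\<^sup>2 / ((1 - y e) + s * (- d e)))
      - (\<Sum>v\<in>V. (- D v)\<^sup>2 / (R v + s * (- D v)))" for s
  have edge_ends: "0 \<le> y e" "0 \<le> y e + d e" "0 \<le> 1 - y e" "0 \<le> (1 - y e) + (- d e)"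
    if "e \<in> E" for e
    using FM_edge_bounds[OF G x that] FM_edge_bounds[OF G y that] by (auto simp: d_def)
  have vertex_ends: "0 \<le> R v" "0 \<le> R v + (- D v)" if "v \<in> V" for v
    using FM_vertex_slack_nonneg[OF y that] FM_vertex_slack_nonneg[OF x that]
    by (simp_all add: R_def D_def d_def sum_subtractf)
  have edge_eq: "(1 - y e) + s * (- d e) = 1 - (y e + s * (x e - y e))" for e s
    by (simp add: d_def algebra_simps)
  have vertex_eq: "R v + s * (- D v) = 1 - (\<Sum>e\<in>incident E v. y e + s * (x e - y e))" for v s
    by (simp add: R_def D_def d_def sum.distrib sum_distrib_left)
  have g_eq: "g s = bethe_entropy V E (\<lambda>e. y e + s * (x e - y e))" for s
    unfolding g_def bethe_entropy_def edge_eq vertex_eq by (simp add: d_def)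
  have "t * g 1 + (1 - t) * g 0 \<le> g t"
  proof (rule f''_le0_imp_above_chord[of g g' g''])
    show "continuous_on {0..1} g" unfolding g_def
      by (intro continuous_intros continuous_on_xlnx_segment edge_ends vertex_ends)
    fix s :: real assume s: "0 < s" "s < 1"
    show "(g has_real_derivative g' s) (at s)" unfolding g_def g'_def
      by (intro DERIV_diff DERIV_sum DERIV_add DERIV_minus has_real_derivative_xlnx_segment(1)
          edge_ends vertex_ends s)
    show "(g' has_real_derivative g'' s) (at s)" unfolding g'_def g''_def
      by (intro DERIV_diff DERIV_sum DERIV_add DERIV_minus has_real_derivative_xlnx_segment(2)
          edge_ends vertex_ends s)
    have "g'' s = (\<Sum>e\<in>E. (x e - y e)\<^sup>2 / (1 - (y e + s * (x e - y e)))
          - (x e - y e)\<^sup>2 / (y e + s * (x e - y e)))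
        - (\<Sum>v\<in>V. (\<Sum>e\<in>incident E v. x e - y e)\<^sup>2
          / (1 - (\<Sum>e\<in>incident E v. y e + s * (x e - y e))))"
      unfolding g''_def edge_eq vertex_eq unfolding power2_minus d_def D_def
      by (intro arg_cong2[where f = "(-)"] sum.cong) auto
    then show "g'' s \<le> 0"
      using bethe_curvature_nonpos_on_segment[OF G x y s] by simp
  qed (use t in auto)
  moreover have "(\<lambda>e. y e + t * (x e - y e)) = (\<lambda>e. t * x e + (1 - t) * y e)"
    by (simp add: algebra_simps)
  ultimately show ?thesis by (simp add: g_eq)
qed

theorem proposition4p17:
  fixes V :: "'v set" and E :: "'v set set"
  assumes "finite_graph V E"
  shows "(\<forall>x\<in>FM V E. bethe_entropy V E x \<ge> 0) \<and> concave_on_set (FM V E) (bethe_entropy V E)"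
  using bethe_entropy_nonneg[OF assms] bethe_entropy_above_chord[OF assms]
  unfolding concave_on_set_def by auto

end
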